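(* Let $m\in\mathbb{N}$, $r\in\{1,\dots,m\}$, and let $Z_r$ be the set of all vertices of $D_m$ of generation number $r$. Then every connected component of the graph $D_m\setminus Z_r$ has diameter (with respect to the metric $d_{D_m}$) strictly less than $2^r$.
   Context: Diamonds: $D_0$ is an edge; $D_i$ is obtained from $D_{i-1}$ by replacing each edge $uv$ by a quadrilateral $u,a,v,b$; $D_m$ has the shortest path metric with unit edges. Generation number $r$ consists of the vertices of $D_{m-r+1}$ not belonging to $D_{m-r}$. $D_m\setminus Z_r$ is the graph obtained by deleting the vertices in $Z_r$ and all edges incident to them. *)

theory Defs
  imports Main
begin

text \<open>Vertices of diamond graphs: the two original endpoints S and T of D_0, and
  for every edge (u,v) of D_(i-1), two new vertices Mid u v False and Mid u v True
  forming the quadrilateral u, a, v, b.\<close>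
datatype dvert = S | T | Mid dvert dvert bool

text \<open>Edges of D_i, stored as ordered pairs (the graph itself is undirected).\<close>
fun dedges :: "nat \<Rightarrow> (dvert \<times> dvert) set" where
  "dedges 0 = {(S, T)}"
| "dedges (Suc i) = (\<Union>(u, v)\<in>dedges i. \<Union>b\<in>UNIV. {(u, Mid u v b), (Mid u v b, v)})"

definition dverts :: "nat \<Rightarrow> dvert set" where
  "dverts i = fst ` dedges i \<union> snd ` dedges i"

definition dadj :: "nat \<Rightarrow> dvert \<Rightarrow> dvert \<Rightarrow> bool" where
  "dadj i x y \<longleftrightarrow> (x, y) \<in> dedges i \<or> (y, x) \<in> dedges i"

text \<open>A walk in the graph with vertex set V and adjacency relation E, given as the
  list of its vertices; its length (number of edges) is length - 1.\<close>
definition is_walk :: "dvert set \<Rightarrow> (dvert \<Rightarrow> dvert \<Rightarrow> bool) \<Rightarrow> dvert list \<Rightarrow> bool" where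
  "is_walk V E p \<longleftrightarrow> p \<noteq> [] \<and> set p \<subseteq> V \<and> (\<forall>k < length p - 1. E (p ! k) (p ! Suc k))"

definition ddist :: "nat \<Rightarrow> dvert \<Rightarrow> dvert \<Rightarrow> nat" where
  "ddist m x y = (LEAST n. \<exists>p. is_walk (dverts m) (dadj m) p \<and> hd p = x \<and> last p = y
                               \<and> length p = Suc n)"

definition gen :: "nat \<Rightarrow> nat \<Rightarrow> dvert set" where
  "gen m r = dverts (m - r + 1) - dverts (m - r)"

definition del_verts :: "nat \<Rightarrow> dvert set \<Rightarrow> dvert set" where
  "del_verts m Z = dverts m - Z"

definition del_component :: "nat \<Rightarrow> dvert set \<Rightarrow> dvert \<Rightarrow> dvert set" where
  "del_component m Z x = {y. \<exists>p. is_walk (del_verts m Z) (dadj m) p \<and> hd p = x \<and> last p = y}"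

definition ddiam :: "nat \<Rightarrow> dvert set \<Rightarrow> nat" where
  "ddiam m A = Sup {ddist m x y | x y. x \<in> A \<and> y \<in> A}"

end

theory Submission
  imports Defs
begin

text \<open>Let \<open>L = m - r\<close>, so that \<open>Z\<^sub>r\<close> consists of the vertices born at step \<open>L + 1\<close>.
  Every vertex \<open>y\<close> born later than step \<open>L + 1\<close> lies inside the sub-diamond grown on an edge
  \<open>(a, z)\<close> of \<open>D_(L+1)\<close> with \<open>z \<in> Z\<^sub>r\<close>, and its anchor \<open>a\<close>, born at step \<open>\<le> L\<close>, is reached from
  \<open>y\<close> by a walk of length less than \<open>2^(r-1)\<close>: each generation step back towards the anchor
  halves the available budget. Edges of \<open>D\<^sub>m\<close> avoiding \<open>Z\<^sub>r\<close> never change the anchor, so a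
  component of \<open>D\<^sub>m \ Z\<^sub>r\<close> has a single anchor and any two of its vertices are joined by a walk
  through it of length less than \<open>2^r\<close>.\<close>

fun level :: "dvert \<Rightarrow> nat" where
  "level S = 0"
| "level T = 0"
| "level (Mid u v b) = Suc (max (level u) (level v))"

text \<open>The anchor of a vertex born after step \<open>L + 1\<close>: follow the younger parent until
  it would be born at step \<open>L + 1\<close>, then take the older one instead.\<close>
fun anchor :: "nat \<Rightarrow> dvert \<Rightarrow> dvert" where
  "anchor L S = S"
| "anchor L T = T"
| "anchor L (Mid u v c) =
    (if level (Mid u v c) \<le> Suc L then Mid u v c
     else if level v < level u then (if level u = Suc L then v else anchor L u)
     else (if level v = Suc L then u else anchor L v))"

lemma anchor_eq_self: "level y \<le> Suc L \<Longrightarrow> anchor L y = y"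
  by (cases y) auto

lemma dverts_Suc_iff:
  "y \<in> dverts (Suc n) \<longleftrightarrow> (\<exists>u v b. (u, v) \<in> dedges n \<and> (y = u \<or> y = Mid u v b \<or> y = v))"
  unfolding dverts_def by (auto, force+)

lemma dedges_in_dverts: "(u, v) \<in> dedges n \<Longrightarrow> u \<in> dverts n \<and> v \<in> dverts n"
  unfolding dverts_def by force

lemma Mid_dedges_Suc:
  "(u, v) \<in> dedges n \<Longrightarrow> (u, Mid u v b) \<in> dedges (Suc n) \<and> (Mid u v b, v) \<in> dedges (Suc n)"
  by (simp only: dedges.simps) blast

lemma level_dedges:
  "(u, v) \<in> dedges n \<Longrightarrow>
    level u \<le> n \<and> level v \<le> n \<and> (level u = n \<or> level v = n) \<and> (0 < n \<longrightarrow> level u \<noteq> level v)"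
proof (induction n arbitrary: u v)
  case (Suc n)
  then obtain a c b where ac: "(a, c) \<in> dedges n"
    and "(u, v) = (a, Mid a c b) \<or> (u, v) = (Mid a c b, c)"
    by (simp only: dedges.simps) blast
  then have uv: "u = a \<and> v = Mid a c b \<or> u = Mid a c b \<and> v = c" by simp
  have "level a \<le> n" "level c \<le> n" "level a = n \<or> level c = n"
    using Suc.IH[OF ac] by blast+
  then have "level (Mid a c b) = Suc n" by (auto simp: max_def)
  with uv \<open>level a \<le> n\<close> \<open>level c \<le> n\<close> show ?case by (elim disjE conjE) simp_all
qed simp

lemma level_le_if_dverts: "y \<in> dverts n \<Longrightarrow> level y \<le> n"
  unfolding dverts_def using level_dedges by force

lemma dverts_mono: "n \<le> m \<Longrightarrow> dverts n \<subseteq> dverts m"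
proof (rule lift_Suc_mono_le)
  show "dverts k \<subseteq> dverts (Suc k)" for k
  proof
    fix x assume "x \<in> dverts k"
    then obtain u v where "(u, v) \<in> dedges k" "x = u \<or> x = v" unfolding dverts_def by force
    then show "x \<in> dverts (Suc k)" unfolding dverts_Suc_iff by blast
  qed
qed

lemma Mid_dverts_dedges: "Mid u v c \<in> dverts n \<Longrightarrow> (u, v) \<in> dedges (level (Mid u v c) - 1)"
proof (induction n)
  case (Suc n)
  then obtain a b e where ab: "(a, b) \<in> dedges n"
    and "Mid u v c = a \<or> Mid u v c = Mid a b e \<or> Mid u v c = b"
    unfolding dverts_Suc_iff by blast
  then show ?case using level_dedges[OF ab] dedges_in_dverts[OF ab] Suc.IH by auto
qed (auto simp: dverts_def)

lemma dverts_Suc_level: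
  assumes "y \<in> dverts (Suc n)" and "level y \<le> n"
  shows "y \<in> dverts n"
proof -
  obtain u v b where uv: "(u, v) \<in> dedges n" "y = u \<or> y = Mid u v b \<or> y = v"
    using assms(1) unfolding dverts_Suc_iff by blast
  then show ?thesis using level_dedges[OF uv(1)] dedges_in_dverts[OF uv(1)] assms(2) by auto
qed

lemma dverts_level: "y \<in> dverts m \<Longrightarrow> level y \<le> n \<Longrightarrow> y \<in> dverts n"
proof (induction m)
  case (Suc m)
  show ?case
  proof (cases "n \<le> m")
    case True
    then show ?thesis using Suc dverts_Suc_level by simp
  next
    case False
    then show ?thesis using Suc.prems(1) dverts_mono[of "Suc m" n] by auto
  qed
qed (use dverts_mono in blast)

lemma gen_eq:
  assumes "1 \<le> r" and "r \<le> m"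
  shows "gen m r = {y \<in> dverts m. level y = Suc (m - r)}"
proof (intro set_eqI iffI)
  fix y assume "y \<in> gen m r"
  then have y: "y \<in> dverts (Suc (m - r))" "y \<notin> dverts (m - r)" unfolding gen_def by simp_all
  have "level y \<le> Suc (m - r)" using level_le_if_dverts[OF y(1)] .
  moreover have "\<not> level y \<le> m - r" using dverts_level[OF y(1)] y(2) by blast
  moreover have "Suc (m - r) \<le> m" using assms by simp
  then have "y \<in> dverts m" using y(1) dverts_mono by blast
  ultimately show "y \<in> {y \<in> dverts m. level y = Suc (m - r)}" by simp
next
  fix y assume "y \<in> {y \<in> dverts m. level y = Suc (m - r)}"
  then have "y \<in> dverts m" "level y = Suc (m - r)" by simp_all
  then show "y \<in> gen m r"
    unfolding gen_def using dverts_level[of y m] level_le_if_dverts[of y "m - r"] by force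
qed

subsection \<open>Anchors\<close>

lemma anchor_Mid:
  assumes "(u, v) \<in> dedges n" and "Suc L \<le> n"
  obtains hi lo where "hi = u \<and> lo = v \<or> hi = v \<and> lo = u" and "level hi = n" and "level lo < n"
    and "anchor L (Mid u v c) = (if level hi = Suc L then lo else anchor L hi)"
proof -
  have lev: "level u \<le> n" "level v \<le> n" "level u = n \<or> level v = n" "level u \<noteq> level v"
    using level_dedges[OF assms(1)] assms(2) by auto
  then have "level (Mid u v c) = Suc n" by (auto simp: max_def)
  show ?thesis
  proof (cases "level v < level u")
    case True
    then show ?thesis using that[of u v] lev \<open>level (Mid u v c) = Suc n\<close> assms(2) by auto
  next
    case False
    then show ?thesis using that[of v u] lev \<open>level (Mid u v c) = Suc n\<close> assms(2) by auto
  qed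
qed

lemma anchor_dedges_eq:
  "(y, y') \<in> dedges n \<Longrightarrow> Suc L \<le> n \<Longrightarrow> level y \<noteq> Suc L \<Longrightarrow> level y' \<noteq> Suc L
    \<Longrightarrow> anchor L y = anchor L y'"
proof (induction n arbitrary: y y')
  case (Suc n)
  then obtain u v c x where uv: "(u, v) \<in> dedges n" and x: "x = u \<or> x = v"
    and yy': "{y, y'} = {x, Mid u v c}"
    by (simp only: dedges.simps) blast
  have "level (Mid u v c) = Suc n"
    using level_dedges[OF uv] by (auto simp: max_def)
  then have "Suc L \<le> n" and "level x \<noteq> Suc L"
    using Suc.prems yy' by (auto simp: doubleton_eq_iff)
  then obtain hi lo where ho: "hi = u \<and> lo = v \<or> hi = v \<and> lo = u" "level hi = n" "level lo < n"
    and anc: "anchor L (Mid u v c) = (if level hi = Suc L then lo else anchor L hi)"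
    using anchor_Mid[OF uv] by blast
  have "anchor L x = anchor L (Mid u v c)"
  proof (cases "level hi = Suc L")
    case True
    then have "x = lo" using x ho \<open>level x \<noteq> Suc L\<close> by auto
    then show ?thesis using True anc ho(2,3) anchor_eq_self by simp
  next
    case False
    show ?thesis
    proof (cases "x = hi")
      case True
      then show ?thesis using False anc by simp
    next
      case x_lo: False
      then have "anchor L u = anchor L v"
        using Suc.IH[OF uv \<open>Suc L \<le> n\<close>] x ho False \<open>level x \<noteq> Suc L\<close> by auto
      then show ?thesis using False x_lo anc x ho by auto
    qed
  qed
  then show ?case using yy' by (auto simp: doubleton_eq_iff)
qed simp

lemma is_walk_anchor:
  assumes p: "is_walk V (dadj m) p" and "Suc L \<le> m" and V: "\<forall>z\<in>V. level z \<noteq> Suc L"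
  shows "i < length p \<Longrightarrow> anchor L (p ! i) = anchor L (hd p)"
proof (induction i)
  case 0
  then show ?case by (simp add: hd_conv_nth)
next
  case (Suc i)
  have "dadj m (p ! i) (p ! Suc i)" and "p ! i \<in> V" and "p ! Suc i \<in> V"
    using p Suc.prems unfolding is_walk_def by (auto dest: nth_mem)
  then have "anchor L (p ! i) = anchor L (p ! Suc i)"
    unfolding dadj_def using anchor_dedges_eq[OF _ \<open>Suc L \<le> m\<close>] V by metis
  then show ?case using Suc by simp
qed

lemma del_component_anchor:
  assumes "y \<in> del_component m Z x" and "Suc L \<le> m"
    and "\<forall>z\<in>del_verts m Z. level z \<noteq> Suc L"
  shows "y \<in> del_verts m Z \<and> anchor L y = anchor L x"
proof -
  obtain p where p: "is_walk (del_verts m Z) (dadj m) p" "hd p = x" "last p = y"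
    using assms(1) unfolding del_component_def by blast
  then have "p \<noteq> []" unfolding is_walk_def by simp
  then have "anchor L (p ! (length p - 1)) = anchor L x"
    using is_walk_anchor[OF p(1) assms(2,3)] p(2) by simp
  then show ?thesis using p \<open>p \<noteq> []\<close> unfolding is_walk_def by (auto simp: last_conv_nth)
qed

inductive dwalk :: "nat \<Rightarrow> dvert \<Rightarrow> dvert \<Rightarrow> nat \<Rightarrow> bool" for m where
  refl: "x \<in> dverts m \<Longrightarrow> dwalk m x x 0"
| step: "dadj m x y \<Longrightarrow> dwalk m y z k \<Longrightarrow> dwalk m x z (Suc k)"

lemma dadj_dverts: "dadj m x y \<Longrightarrow> x \<in> dverts m \<and> y \<in> dverts m"
  unfolding dadj_def using dedges_in_dverts by blast

lemma dwalk_trans: "dwalk m x y k \<Longrightarrow> dwalk m y z l \<Longrightarrow> dwalk m x z (k + l)"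
  by (induction rule: dwalk.induct) (auto intro: dwalk.step)

lemma dwalk_edge: "dadj m x y \<Longrightarrow> dwalk m x y 1"
  using dwalk.step[OF _ dwalk.refl] dadj_dverts by fastforce

lemma dwalk_sym: "dwalk m x y k \<Longrightarrow> dwalk m y x k"
proof (induction rule: dwalk.induct)
  case (step x y z k)
  have "dwalk m y x 1" using step.hyps(1) dwalk_edge unfolding dadj_def by blast
  from dwalk_trans[OF step.IH this] show ?case by simp
qed (rule dwalk.refl)

lemma dadj_Suc_subdivide: "dadj n x y \<Longrightarrow> \<exists>z. dadj (Suc n) x z \<and> dadj (Suc n) z y"
  unfolding dadj_def using Mid_dedges_Suc by blast

lemma dwalk_Suc: "dwalk n x y k \<Longrightarrow> dwalk (Suc n) x y (2 * k)"
proof (induction rule: dwalk.induct)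
  case (refl x)
  then show ?case using dverts_mono[of n "Suc n"] by (auto intro: dwalk.refl)
next
  case (step x y z k)
  then obtain w where "dadj (Suc n) x w" "dadj (Suc n) w y"
    using dadj_Suc_subdivide by blast
  then show ?case using step.IH by (auto intro!: dwalk.step)
qed

lemma dadj_dwalk:
  assumes "dadj l x y" and "l \<le> m"
  shows "dwalk m x y (2 ^ (m - l))"
  using assms(2)
proof (induction m rule: dec_induct)
  case base
  then show ?case using dwalk_edge[OF assms(1)] by simp
next
  case (step n)
  then show ?case using dwalk_Suc by (simp add: Suc_diff_le)
qed

lemma dwalk_is_walk:
  "dwalk m x y k \<Longrightarrow> \<exists>p. is_walk (dverts m) (dadj m) p \<and> hd p = x \<and> last p = y \<and> length p = Suc k"
proof (induction rule: dwalk.induct)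
  case (refl x)
  then show ?case by (intro exI[of _ "[x]"]) (simp add: is_walk_def)
next
  case (step x y z k)
  then obtain p where p: "is_walk (dverts m) (dadj m) p" "hd p = y" "last p = z" "length p = Suc k"
    by blast
  have "dadj m ((x # p) ! i) ((x # p) ! Suc i)" if "i < length p" for i
    using p step.hyps(1) that by (cases i; cases p) (auto simp: is_walk_def)
  then have "is_walk (dverts m) (dadj m) (x # p)"
    using p(1) dadj_dverts[OF step.hyps(1)] by (simp add: is_walk_def)
  then show ?case using p by (intro exI[of _ "x # p"]) (cases p, auto)
qed

lemma ddist_le_dwalk: "dwalk m x y k \<Longrightarrow> ddist m x y \<le> k"
  unfolding ddist_def using dwalk_is_walk by (blast intro: Least_le)

lemma ddiam_less:
  assumes "\<And>x y. x \<in> A \<Longrightarrow> y \<in> A \<Longrightarrow> ddist m x y < b" and "0 < b"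
  shows "ddiam m A < b"
proof -
  let ?D = "{ddist m x y | x y. x \<in> A \<and> y \<in> A}"
  have D: "?D \<subseteq> {..<b}" using assms(1) by auto
  then have "finite ?D" using finite_subset by blast
  with D assms(2) show ?thesis
    unfolding ddiam_def Sup_nat_def by (auto dest: Max_in)
qed

subsection \<open>Distance to the anchor\<close>

lemma Mid_dwalk_parents:
  assumes "Mid u v c \<in> dverts m"
  shows "dwalk m u (Mid u v c) (2 ^ (m - level (Mid u v c)))"
    and "dwalk m v (Mid u v c) (2 ^ (m - level (Mid u v c)))"
proof -
  let ?l = "level (Mid u v c)"
  have "(u, v) \<in> dedges (?l - 1)" using Mid_dverts_dedges[OF assms] .
  then have "dadj ?l u (Mid u v c)" and "dadj ?l v (Mid u v c)"
    using Mid_dedges_Suc[of u v "?l - 1" c] unfolding dadj_def by simp_all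
  then show "dwalk m u (Mid u v c) (2 ^ (m - ?l))" and "dwalk m v (Mid u v c) (2 ^ (m - ?l))"
    using dadj_dwalk level_le_if_dverts[OF assms] by auto
qed

lemma dwalk_anchor:
  "y \<in> dverts m \<Longrightarrow> Suc (Suc L) \<le> level y
    \<Longrightarrow> \<exists>k. dwalk m (anchor L y) y k \<and> k + 2 ^ (m - level y) \<le> 2 ^ (m - Suc L)"
proof (induction y)
  case (Mid u v c)
  define n where "n = level (Mid u v c) - 1"
  have lev: "level (Mid u v c) = Suc n" "Suc n \<le> m" "Suc L \<le> n"
    using Mid.prems level_le_if_dverts[OF Mid.prems(1)] unfolding n_def by auto
  have uv: "(u, v) \<in> dedges n" using Mid_dverts_dedges[OF Mid.prems(1)] unfolding n_def .
  obtain hi lo where ho: "hi = u \<and> lo = v \<or> hi = v \<and> lo = u" "level hi = n" "level lo < n"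
    and anc: "anchor L (Mid u v c) = (if level hi = Suc L then lo else anchor L hi)"
    using anchor_Mid[OF uv lev(3)] by blast
  have walks: "dwalk m hi (Mid u v c) (2 ^ (m - Suc n))" "dwalk m lo (Mid u v c) (2 ^ (m - Suc n))"
    using Mid_dwalk_parents[OF Mid.prems(1)] ho(1) lev(1) by auto
  have double: "2 ^ (m - Suc n) + 2 ^ (m - Suc n) = (2::nat) ^ (m - n)"
  proof -
    have "m - n = Suc (m - Suc n)" using lev(2) by simp
    then show ?thesis by simp
  qed
  show ?case
  proof (cases "level hi = Suc L")
    case True
    then have "anchor L (Mid u v c) = lo" and "n = Suc L" using anc ho(2) by simp_all
    then show ?thesis unfolding lev(1) using walks(2) double by auto
  next
    case False
    have "hi \<in> dverts m" using dedges_in_dverts[OF uv] ho(1) dverts_mono[of n m] lev(2) by auto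
    moreover have "Suc (Suc L) \<le> level hi" using False ho(2) lev(3) by simp
    ultimately obtain k where "dwalk m (anchor L hi) hi k" "k + 2 ^ (m - n) \<le> 2 ^ (m - Suc L)"
      using Mid.IH ho(1,2) by blast
    moreover have "anchor L (Mid u v c) = anchor L hi" using anc False by simp
    ultimately show ?thesis
      unfolding lev(1) using dwalk_trans[OF _ walks(1)] double
      by (metis add.assoc)
  qed
qed simp_all

lemma dwalk_anchor_less:
  assumes "y \<in> dverts m" and "level y \<noteq> Suc L"
  shows "\<exists>k. dwalk m (anchor L y) y k \<and> k < 2 ^ (m - Suc L)"
proof (cases "Suc (Suc L) \<le> level y")
  case True
  then obtain k where "dwalk m (anchor L y) y k" "k + 2 ^ (m - level y) \<le> 2 ^ (m - Suc L)"
    using dwalk_anchor[OF assms(1)] by blast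
  moreover have "(0::nat) < 2 ^ (m - level y)" by simp
  ultimately show ?thesis by (intro exI[of _ k]) linarith
next
  case False
  then show ?thesis using assms anchor_eq_self dwalk.refl by (intro exI[of _ 0]) auto
qed

theorem mainTheorem10:
  fixes m r :: nat
  assumes "1 \<le> r" and "r \<le> m"
  shows "\<forall>x \<in> del_verts m (gen m r). ddiam m (del_component m (gen m r) x) < 2 ^ r"
proof
  fix x
  define L where "L = m - r"
  have "Suc L \<le> m" and budget: "(2::nat) ^ (m - Suc L) + 2 ^ (m - Suc L) = 2 ^ r"
    using assms unfolding L_def by (auto simp flip: mult_2 power_Suc)
  have avoid: "\<forall>z\<in>del_verts m (gen m r). level z \<noteq> Suc L"
    using gen_eq[OF assms] unfolding del_verts_def L_def by auto
  show "ddiam m (del_component m (gen m r) x) < 2 ^ r"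
  proof (rule ddiam_less)
    fix y y' assume "y \<in> del_component m (gen m r) x" "y' \<in> del_component m (gen m r) x"
    then have "y \<in> del_verts m (gen m r)" "y' \<in> del_verts m (gen m r)"
      and same: "anchor L y = anchor L y'"
      using del_component_anchor[OF _ \<open>Suc L \<le> m\<close> avoid] by metis+
    then obtain k k' where "dwalk m (anchor L y) y k" "k < 2 ^ (m - Suc L)"
      and "dwalk m (anchor L y') y' k'" "k' < 2 ^ (m - Suc L)"
      using dwalk_anchor_less avoid unfolding del_verts_def by blast
    then have "ddist m y y' \<le> k + k'"
      using ddist_le_dwalk dwalk_trans[OF dwalk_sym] same by metis
    then show "ddist m y y' < 2 ^ r" using budget \<open>k < _\<close> \<open>k' < _\<close> by linarith
  qed simp
qed

end
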